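(* Let $(M,d)$ be a metric space and let $\mathcal S$ be a semigroup (under composition) of self-mappings of $M$ generated by a family of uniformly asymptotically regular mappings. Suppose $\mathcal S$ is subsurjective, i.e. there is a nonempty set $D\subset M$ such that $T(D)=D$ for every $T\in\mathcal S$. Then $\mathcal S$ has a common fixed point: there is $x\in M$ with $Tx=x$ for all $T\in\mathcal S$.
   Context: A mapping $T:M\to M$ is uniformly asymptotically regular if $\lim_{n\to\infty}\sup_{x\in M} d(T^{n+1}x,T^{n}x)=0$. *)

theory Defs
  imports "HOL-Analysis.Analysis"
begin

definition unif_asym_reg :: "('a::metric_space \<Rightarrow> 'a) \<Rightarrow> bool" where
  "unif_asym_reg T \<longleftrightarrow>
     (\<lambda>n. SUP x. ereal (dist ((T ^^ Suc n) x) ((T ^^ n) x))) \<longlonglongrightarrow> 0"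

inductive_set gen_semigroup :: "('a \<Rightarrow> 'a) set \<Rightarrow> ('a \<Rightarrow> 'a) set" for F where
  base: "T \<in> F \<Longrightarrow> T \<in> gen_semigroup F"
| comp: "S \<in> gen_semigroup F \<Longrightarrow> T \<in> gen_semigroup F \<Longrightarrow> S \<circ> T \<in> gen_semigroup F"

end

theory Submission
  imports Defs
begin

text \<open>A point of an invariant set D lies in the image of every iterate T^n, say x = T^n y, so
  d(T x, x) = d(T^(n+1) y, T^n y) is bounded by the n-th supremum in the definition of uniform
  asymptotic regularity; these tend to 0, hence x is a fixed point of every generator.
  A point fixed by all generators is fixed by every composition of them.\<close>

lemma funpow_image_eq:
  assumes "f ` A = A"
  shows "(f ^^ n) ` A = A"
proof (induction n)
  case 0
  then show ?case by simp
next
  case (Suc n)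
  have "(f ^^ Suc n) ` A = f ` ((f ^^ n) ` A)" by (simp add: image_comp)
  then show ?case using Suc assms by simp
qed

lemma dist_le_SUP_funpow:
  fixes T :: "'a::metric_space \<Rightarrow> 'a"
  assumes "x \<in> range (T ^^ n)"
  shows "ereal (dist (T x) x) \<le> (SUP y. ereal (dist ((T ^^ Suc n) y) ((T ^^ n) y)))"
proof -
  obtain y where y: "x = (T ^^ n) y" using assms by blast
  have "ereal (dist (T x) x) = ereal (dist ((T ^^ Suc n) y) ((T ^^ n) y))"
    using y by simp
  also have "\<dots> \<le> (SUP y. ereal (dist ((T ^^ Suc n) y) ((T ^^ n) y)))"
    by (rule SUP_upper) simp
  finally show ?thesis .
qed

lemma unif_asym_reg_fixes_range_funpow:
  fixes T :: "'a::metric_space \<Rightarrow> 'a"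
  assumes "unif_asym_reg T" and "\<And>n. x \<in> range (T ^^ n)"
  shows "T x = x"
proof -
  have "ereal (dist (T x) x) \<le> 0"
  proof (rule LIMSEQ_le_const)
    show "(\<lambda>n. SUP y. ereal (dist ((T ^^ Suc n) y) ((T ^^ n) y))) \<longlonglongrightarrow> 0"
      using assms(1) unfolding unif_asym_reg_def .
    show "\<exists>N. \<forall>n\<ge>N. ereal (dist (T x) x) \<le> (SUP y. ereal (dist ((T ^^ Suc n) y) ((T ^^ n) y)))"
      using dist_le_SUP_funpow[OF assms(2)] by blast
  qed
  then show ?thesis by simp
qed

lemma unif_asym_reg_fixes_invariant_set:
  fixes T :: "'a::metric_space \<Rightarrow> 'a"
  assumes "unif_asym_reg T" and "T ` D = D" and "x \<in> D"
  shows "T x = x"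
proof (rule unif_asym_reg_fixes_range_funpow[OF assms(1)])
  show "x \<in> range (T ^^ n)" for n
    using funpow_image_eq[OF assms(2), of n] assms(3) by blast
qed

lemma gen_semigroup_fixes:
  assumes "\<And>T. T \<in> F \<Longrightarrow> T x = x" and "S \<in> gen_semigroup F"
  shows "S x = x"
  using assms(2)
proof induction
  case (base T)
  then show ?case by (rule assms(1))
next
  case (comp S T)
  then show ?case by simp
qed

theorem theorem3p10:
  fixes F :: "('a::metric_space \<Rightarrow> 'a) set" and D :: "'a set"
  assumes "\<forall>T\<in>F. unif_asym_reg T"
    and "D \<noteq> {}"
    and "\<forall>T\<in>gen_semigroup F. T ` D = D"
  shows "\<exists>x. \<forall>T\<in>gen_semigroup F. T x = x"
proof -
  obtain x where x: "x \<in> D" using assms(2) by blast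
  have "T x = x" if "T \<in> F" for T
    using unif_asym_reg_fixes_invariant_set[of T D x] assms(1,3) gen_semigroup.base[OF that] that x
    by blast
  then show ?thesis using gen_semigroup_fixes[of F x] by blast
qed

end
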